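(* Let $(E,f)$ be a polymatroid that admits a tensor product with the uniform matroid $U_{2,3}$. Then $(E,f)$ is $1$-CI; that is, for every pair $(X,Y)$ of subsets of $E$ there exist a finite set $Z$ with $Z\cap E=\emptyset$ and a polymatroid $(E\cup Z, h)$ with $h(S)=f(S)$ for all $S\subseteq E$, such that $h(Z)=f(X)+f(Y)-f(X\cup Y)$, $h(X\cup Z)=h(X)$ and $h(Y\cup Z)=h(Y)$.
   Context: A polymatroid $(E,f)$ consists of a finite ground set $E$ and a function $f\colon 2^E\to\mathbb{R}$ with $f(\emptyset)=0$ that is monotone ($S\subseteq T\Rightarrow f(S)\le f(T)$) and submodular ($f(S)+f(T)\ge f(S\cup T)+f(S\cap T)$). The uniform matroid $U_{2,3}$ is the polymatroid on $\{1,2,3\}$ with rank function $r(T)=\min\{|T|,2\}$. A tensor product of polymatroids $(E_1,f_1)$ and $(E_2,f_2)$ is a polymatroid $(E_1\times E_2,g)$ such that $g(S\times T)=f_1(S)f_2(T)$ for all $S\subseteq E_1$, $T\subseteq E_2$. An extension $(E\cup Z,h)$ of $(E,f)$ (with $Z\cap E=\emptyset$) in which $h(Z)=f(X)+f(Y)-f(X\cup Y)$ and $h(X\cup Z)=h(X)$, $h(Y\cup Z)=h(Y)$ is called a common information extension for the pair $(X,Y)$. A polymatroid is called $1$-CI if it admits a common information extension for every pair of subsets of its ground set. *)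

theory Defs
  imports Complex_Main
begin

text \<open>A polymatroid (E,f): finite ground set E, f defined on subsets of E
  (values of f outside Pow E are irrelevant), normalized, monotone, submodular.\<close>
definition polymatroid :: "'a set \<Rightarrow> ('a set \<Rightarrow> real) \<Rightarrow> bool" where
  "polymatroid E f \<longleftrightarrow> finite E \<and> f {} = 0
     \<and> (\<forall>S T. S \<subseteq> T \<and> T \<subseteq> E \<longrightarrow> f S \<le> f T)
     \<and> (\<forall>S T. S \<subseteq> E \<and> T \<subseteq> E \<longrightarrow> f S + f T \<ge> f (S \<union> T) + f (S \<inter> T))"

definition U23_ground :: "nat set" where "U23_ground = {1,2,3}"
definition U23_rank :: "nat set \<Rightarrow> real" where "U23_rank T = real (min (card T) 2)"

definition is_tensor_product ::
  "'a set \<Rightarrow> ('a set \<Rightarrow> real) \<Rightarrow> 'b set \<Rightarrow> ('b set \<Rightarrow> real) \<Rightarrow> (('a \<times> 'b) set \<Rightarrow> real) \<Rightarrow> bool" where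
  "is_tensor_product E1 f1 E2 f2 g \<longleftrightarrow> polymatroid (E1 \<times> E2) g
     \<and> (\<forall>S T. S \<subseteq> E1 \<and> T \<subseteq> E2 \<longrightarrow> g (S \<times> T) = f1 S * f2 T)"

definition admits_tensor_product ::
  "'a set \<Rightarrow> ('a set \<Rightarrow> real) \<Rightarrow> 'b set \<Rightarrow> ('b set \<Rightarrow> real) \<Rightarrow> bool" where
  "admits_tensor_product E1 f1 E2 f2 \<longleftrightarrow> (\<exists>g. is_tensor_product E1 f1 E2 f2 g)"

text \<open>Common information extension for (X,Y).  The new ground set is the disjoint
  union of E (tagged Inl) and a finite set Z (tagged Inr, elements drawn from nat).\<close>
definition CI_extension :: "'a set \<Rightarrow> ('a set \<Rightarrow> real) \<Rightarrow> 'a set \<Rightarrow> 'a set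
     \<Rightarrow> nat set \<Rightarrow> (('a + nat) set \<Rightarrow> real) \<Rightarrow> bool" where
  "CI_extension E f X Y Z h \<longleftrightarrow> finite Z
     \<and> polymatroid (Inl ` E \<union> Inr ` Z) h
     \<and> (\<forall>S. S \<subseteq> E \<longrightarrow> h (Inl ` S) = f S)
     \<and> h (Inr ` Z) = f X + f Y - f (X \<union> Y)
     \<and> h (Inl ` X \<union> Inr ` Z) = h (Inl ` X)
     \<and> h (Inl ` Y \<union> Inr ` Z) = h (Inl ` Y)"

definition one_CI :: "'a set \<Rightarrow> ('a set \<Rightarrow> real) \<Rightarrow> bool" where
  "one_CI E f \<longleftrightarrow> (\<forall>X Y. X \<subseteq> E \<and> Y \<subseteq> E \<longrightarrow> (\<exists>Z h. CI_extension E f X Y Z h))"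

end

theory Submission
  imports Defs
begin

text \<open>Let g be a tensor product of f with U_{2,3}. Each layer E \<times> {i} of g is a copy of f,
  two different layers are independent, g (S \<times> {i} \<union> T \<times> {j}) = f S + f T, and two copies
  of a set S span the third. The common information of X and Y is realised by the set
  X \<times> {1} \<union> Y \<times> {2}: adjoin a point z standing for this set to the copy E \<times> {3} of E and
  subtract f (X \<union> Y) from every rank containing z. This is exactly the marginal rank of z over
  all of E, so monotonicity survives, and it leaves rank f X + f Y - f (X \<union> Y) for z. Since
  X \<times> {1} and X \<times> {3} span X \<times> {2}, adding z to X does not increase the rank; symmetrically
  for Y.\<close>

lemma polymatroid_empty: "polymatroid E f \<Longrightarrow> f {} = 0"
  unfolding polymatroid_def by blast

lemma polymatroid_mono: "polymatroid E f \<Longrightarrow> S \<subseteq> T \<Longrightarrow> T \<subseteq> E \<Longrightarrow> f S \<le> f T"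
  unfolding polymatroid_def by blast

lemma polymatroid_submodular:
  "polymatroid E f \<Longrightarrow> S \<subseteq> E \<Longrightarrow> T \<subseteq> E \<Longrightarrow> f (S \<union> T) + f (S \<inter> T) \<le> f S + f T"
  unfolding polymatroid_def by blast

lemma polymatroid_spanned_mono:
  assumes "polymatroid E f" "P \<subseteq> R" "R \<subseteq> E" "Q \<subseteq> E" "f (P \<union> Q) = f P"
  shows "f (R \<union> Q) = f R"
proof -
  have "R \<union> (P \<union> Q) = R \<union> Q"
    using assms(2) by auto
  then have "f (R \<union> Q) + f (R \<inter> (P \<union> Q)) \<le> f R + f (P \<union> Q)"
    using polymatroid_submodular[OF assms(1), of R "P \<union> Q"] assms(2-4) by auto
  moreover have "f P \<le> f (R \<inter> (P \<union> Q))"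
    using assms by (intro polymatroid_mono[OF assms(1)]) auto
  moreover have "f R \<le> f (R \<union> Q)"
    using assms by (intro polymatroid_mono[OF assms(1)]) auto
  ultimately show ?thesis
    using assms(5) by linarith
qed

lemma polymatroid_pullback:
  assumes "polymatroid G g" "finite E" "\<And>x. x \<in> E \<Longrightarrow> \<phi> x \<subseteq> G"
  shows "polymatroid E (\<lambda>S. g (\<Union> (\<phi> ` S)))"
  unfolding polymatroid_def
proof (intro conjI allI impI)
  fix S T
  assume "S \<subseteq> T \<and> T \<subseteq> E"
  then show "g (\<Union> (\<phi> ` S)) \<le> g (\<Union> (\<phi> ` T))"
    using assms by (intro polymatroid_mono[OF assms(1)]) auto
next
  fix S T
  assume ST: "S \<subseteq> E \<and> T \<subseteq> E"
  have "g (\<Union> (\<phi> ` (S \<inter> T))) \<le> g (\<Union> (\<phi> ` S) \<inter> \<Union> (\<phi> ` T))"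
    using ST assms by (intro polymatroid_mono[OF assms(1)]) auto
  moreover have "g (\<Union> (\<phi> ` S) \<union> \<Union> (\<phi> ` T)) + g (\<Union> (\<phi> ` S) \<inter> \<Union> (\<phi> ` T))
      \<le> g (\<Union> (\<phi> ` S)) + g (\<Union> (\<phi> ` T))"
    using ST assms by (intro polymatroid_submodular[OF assms(1)]) auto
  ultimately show "g (\<Union> (\<phi> ` S)) + g (\<Union> (\<phi> ` T)) \<ge> g (\<Union> (\<phi> ` (S \<union> T))) + g (\<Union> (\<phi> ` (S \<inter> T)))"
    by (simp add: image_Un)
qed (use assms polymatroid_empty in auto)

lemma polymatroid_discount_point:
  assumes h: "polymatroid E h" and "z \<in> E" and \<kappa>: "\<kappa> \<le> h E - h (E - {z})"
  shows "polymatroid E (\<lambda>S. h S - (if z \<in> S then \<kappa> else 0))"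
  unfolding polymatroid_def
proof (intro conjI allI impI)
  fix S T
  assume ST: "S \<subseteq> T \<and> T \<subseteq> E"
  have "h S \<le> h T - \<kappa>" if "z \<notin> S" "z \<in> T"
  proof -
    have "T \<union> (E - {z}) = E" "T \<inter> (E - {z}) = T - {z}"
      using ST \<open>z \<in> E\<close> that by auto
    then have "h E + h (T - {z}) \<le> h T + h (E - {z})"
      using polymatroid_submodular[OF h, of T "E - {z}"] ST by simp
    moreover have "h S \<le> h (T - {z})"
      using ST that by (intro polymatroid_mono[OF h]) auto
    ultimately show ?thesis
      using \<kappa> by linarith
  qed
  then show "h S - (if z \<in> S then \<kappa> else 0) \<le> h T - (if z \<in> T then \<kappa> else 0)"
    using ST polymatroid_mono[OF h, of S T] by auto
next
  fix S T
  assume "S \<subseteq> E \<and> T \<subseteq> E"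
  then show "h S - (if z \<in> S then \<kappa> else 0) + (h T - (if z \<in> T then \<kappa> else 0))
      \<ge> h (S \<union> T) - (if z \<in> S \<union> T then \<kappa> else 0) + (h (S \<inter> T) - (if z \<in> S \<inter> T then \<kappa> else 0))"
    using polymatroid_submodular[OF h, of S T] by auto
qed (use h polymatroid_empty in \<open>auto simp: polymatroid_def\<close>)

definition ci_atoms :: "'a set \<Rightarrow> 'a set \<Rightarrow> 'a + nat \<Rightarrow> ('a \<times> nat) set" where
  "ci_atoms X Y = case_sum (\<lambda>x. {(x, 3)}) (\<lambda>_. X \<times> {1} \<union> Y \<times> {2})"

lemma ci_atoms_Inl: "\<Union> (ci_atoms X Y ` Inl ` A) = A \<times> {3}"
  by (auto simp: ci_atoms_def)

lemma ci_atoms_Inl_Inr: "\<Union> (ci_atoms X Y ` (Inl ` A \<union> Inr ` {0})) = A \<times> {3} \<union> X \<times> {1} \<union> Y \<times> {2}"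
  by (auto simp: ci_atoms_def)

locale tensor_U23 =
  fixes E :: "'a set" and f :: "'a set \<Rightarrow> real" and g :: "('a \<times> nat) set \<Rightarrow> real"
  assumes polymatroid_f: "polymatroid E f"
    and tensor: "is_tensor_product E f U23_ground U23_rank g"
begin

lemma polymatroid_g: "polymatroid (E \<times> {1,2,3}) g"
  using tensor unfolding is_tensor_product_def U23_ground_def by simp

lemma g_product: "S \<subseteq> E \<Longrightarrow> L \<subseteq> {1,2,3} \<Longrightarrow> g (S \<times> L) = f S * min (card L) 2"
  using tensor unfolding is_tensor_product_def U23_ground_def U23_rank_def by simp

lemma g_layer: "S \<subseteq> E \<Longrightarrow> i \<in> {1,2,3} \<Longrightarrow> g (S \<times> {i}) = f S"
  using g_product[of S "{i}"] by simp

lemma layer_spanned: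
  assumes "i \<in> {1,2,3}" "j \<in> {1,2,3}" "k \<in> {1,2,3}" "i \<noteq> j"
    and "S \<subseteq> E" "S \<times> {i,j} \<subseteq> R" "R \<subseteq> E \<times> {1,2,3}"
  shows "g (R \<union> S \<times> {k}) = g R"
proof (rule polymatroid_spanned_mono[OF polymatroid_g assms(6,7)])
  have "card {i,j,k} \<ge> 2"
    using card_mono[of "{i,j,k}" "{i,j}"] \<open>i \<noteq> j\<close> by auto
  moreover have "S \<times> {i,j} \<union> S \<times> {k} = S \<times> {i,j,k}"
    by auto
  ultimately show "g (S \<times> {i,j} \<union> S \<times> {k}) = g (S \<times> {i,j})"
    using assms g_product[of S "{i,j,k}"] g_product[of S "{i,j}"] by simp
qed (use assms in auto)

lemma two_layers_le:
  assumes "i \<in> {1,2,3}" "j \<in> {1,2,3}" "i \<noteq> j" "S \<subseteq> E" "T \<subseteq> E"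
  shows "g (S \<times> {i} \<union> T \<times> {j}) \<le> f S + f T"
proof -
  have "S \<times> {i} \<inter> T \<times> {j} = {}"
    using assms(3) by auto
  moreover have "S \<times> {i} \<subseteq> E \<times> {1,2,3}" "T \<times> {j} \<subseteq> E \<times> {1,2,3}"
    using assms by auto
  ultimately show ?thesis
    using polymatroid_submodular[OF polymatroid_g, of "S \<times> {i}" "T \<times> {j}"]
      polymatroid_empty[OF polymatroid_g] assms g_layer by simp
qed

lemma two_layers_nested:
  assumes "i \<in> {1,2,3}" "j \<in> {1,2,3}" "i \<noteq> j" "S \<subseteq> T" "T \<subseteq> E"
  shows "g (S \<times> {i} \<union> T \<times> {j}) = f S + f T"
proof -
  have "(S \<times> {i} \<union> T \<times> {j}) \<union> T \<times> {i} = T \<times> {i,j}"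
    and "(S \<times> {i} \<union> T \<times> {j}) \<inter> T \<times> {i} = S \<times> {i}"
    using assms by auto
  then have "g (T \<times> {i,j}) + g (S \<times> {i}) \<le> g (S \<times> {i} \<union> T \<times> {j}) + g (T \<times> {i})"
    using polymatroid_submodular[OF polymatroid_g, of "S \<times> {i} \<union> T \<times> {j}" "T \<times> {i}"] assms
    by auto
  moreover have "g (T \<times> {i,j}) = 2 * f T"
    using assms g_product[of T "{i,j}"] by simp
  ultimately show ?thesis
    using assms g_layer two_layers_le[of i j S T] by force
qed

lemma two_layers:
  assumes "i \<in> {1,2,3}" "j \<in> {1,2,3}" "i \<noteq> j" "S \<subseteq> E" "T \<subseteq> E"
  shows "g (S \<times> {i} \<union> T \<times> {j}) = f S + f T"
proof -
  have "(S \<times> {i} \<union> T \<times> {j}) \<union> (S \<union> T) \<times> {j} = S \<times> {i} \<union> (S \<union> T) \<times> {j}"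
    and "(S \<times> {i} \<union> T \<times> {j}) \<inter> (S \<union> T) \<times> {j} = T \<times> {j}"
    using assms by auto
  then have "g (S \<times> {i} \<union> (S \<union> T) \<times> {j}) + g (T \<times> {j})
      \<le> g (S \<times> {i} \<union> T \<times> {j}) + g ((S \<union> T) \<times> {j})"
    using polymatroid_submodular[OF polymatroid_g, of "S \<times> {i} \<union> T \<times> {j}" "(S \<union> T) \<times> {j}"] assms
    by auto
  then show ?thesis
    using assms g_layer two_layers_le[of i j S T] two_layers_nested[of i j S "S \<union> T"] by force
qed

lemma three_layers:
  assumes "i \<in> {1,2,3}" "j \<in> {1,2,3}" "k \<in> {1,2,3}" "i \<noteq> k" "j \<noteq> k"
    and "X \<subseteq> A" "A \<subseteq> E" "Y \<subseteq> E"
  shows "g (A \<times> {k} \<union> X \<times> {i} \<union> Y \<times> {j}) = f A + f (X \<union> Y)"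
proof -
  let ?R = "A \<times> {k} \<union> X \<times> {i} \<union> Y \<times> {j}"
  have "g (?R \<union> X \<times> {j}) = g ?R"
    using assms by (intro layer_spanned[of i k]) auto
  moreover have "g (A \<times> {k} \<union> (X \<union> Y) \<times> {j} \<union> X \<times> {i}) = g (A \<times> {k} \<union> (X \<union> Y) \<times> {j})"
    using assms by (intro layer_spanned[of j k]) auto
  moreover have "?R \<union> X \<times> {j} = A \<times> {k} \<union> (X \<union> Y) \<times> {j} \<union> X \<times> {i}"
    by auto
  ultimately show ?thesis
    using assms two_layers[of k j A "X \<union> Y"] by auto
qed

definition ci_ext :: "'a set \<Rightarrow> 'a set \<Rightarrow> ('a + nat) set \<Rightarrow> real" where
  "ci_ext X Y S = g (\<Union> (ci_atoms X Y ` S)) - (if Inr 0 \<in> S then f (X \<union> Y) else 0)"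

lemma ci_ext_Inl: "ci_ext X Y (Inl ` A) = g (A \<times> {3})"
  unfolding ci_ext_def ci_atoms_Inl by auto

lemma ci_ext_Inl_Inr:
  "ci_ext X Y (Inl ` A \<union> Inr ` {0}) = g (A \<times> {3} \<union> X \<times> {1} \<union> Y \<times> {2}) - f (X \<union> Y)"
  unfolding ci_ext_def ci_atoms_Inl_Inr by auto

lemma polymatroid_ci_ext:
  assumes "X \<subseteq> E" "Y \<subseteq> E"
  shows "polymatroid (Inl ` E \<union> Inr ` {0}) (ci_ext X Y)"
proof -
  let ?G = "Inl ` E \<union> Inr ` {0}"
  have pullback: "polymatroid ?G (\<lambda>S. g (\<Union> (ci_atoms X Y ` S)))"
    using polymatroid_f assms unfolding polymatroid_def[of E f]
    by (intro polymatroid_pullback[OF polymatroid_g]) (auto simp: ci_atoms_def)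
  have G_minus_point: "?G - {Inr 0} = Inl ` E"
    by auto
  have discount: "f (X \<union> Y) \<le> g (\<Union> (ci_atoms X Y ` ?G)) - g (\<Union> (ci_atoms X Y ` (?G - {Inr 0})))"
    unfolding G_minus_point ci_atoms_Inl ci_atoms_Inl_Inr
    using assms three_layers[of 1 2 3 X E Y] g_layer[of E 3] by simp
  show ?thesis
    unfolding ci_ext_def by (rule polymatroid_discount_point[OF pullback _ discount]) simp
qed

lemma ci_extension_ci_ext:
  assumes "X \<subseteq> E" "Y \<subseteq> E"
  shows "CI_extension E f X Y {0} (ci_ext X Y)"
  unfolding CI_extension_def
proof (intro conjI allI impI)
  show "ci_ext X Y (Inl ` S) = f S" if "S \<subseteq> E" for S
    using that by (simp add: ci_ext_Inl g_layer)
  show "ci_ext X Y (Inr ` {0}) = f X + f Y - f (X \<union> Y)"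
    using ci_ext_Inl_Inr[where A = "{}"] assms two_layers[of 1 2 X Y] by simp
  show "ci_ext X Y (Inl ` X \<union> Inr ` {0}) = ci_ext X Y (Inl ` X)"
    unfolding ci_ext_Inl ci_ext_Inl_Inr
    using assms three_layers[of 1 2 3 X X Y] g_layer[of X 3] by simp
  have "g (Y \<times> {3} \<union> X \<times> {1} \<union> Y \<times> {2}) = f Y + f (X \<union> Y)"
    using assms three_layers[of 2 1 3 Y Y X] by (simp add: Un_commute Un_left_commute)
  then show "ci_ext X Y (Inl ` Y \<union> Inr ` {0}) = ci_ext X Y (Inl ` Y)"
    unfolding ci_ext_Inl ci_ext_Inl_Inr using assms g_layer[of Y 3] by simp
qed (use polymatroid_ci_ext assms in simp_all)

end

theorem theorem5p1:
  fixes E :: "'a set" and f :: "'a set \<Rightarrow> real"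
  assumes "polymatroid E f"
    and "admits_tensor_product E f U23_ground U23_rank"
  shows "one_CI E f"
proof -
  obtain g where "is_tensor_product E f U23_ground U23_rank g"
    using assms(2) unfolding admits_tensor_product_def by blast
  then interpret tensor_U23 E f g
    using assms(1) by unfold_locales
  show ?thesis
    unfolding one_CI_def using ci_extension_ci_ext by blast
qed

end
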